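(* In the setting described in the context, let $\lambda^*$ be an optimal solution of $\max_{\lambda\in\mathbb{R}^m}d(\lambda)$, and let $\{\lambda^k\}$ be generated by the IAL framework with a nonnegative sequence $\{\eta_k\}$ satisfying $\sum_{k=1}^{+\infty}\eta_k<+\infty$. Then $$\|\lambda^k-\lambda^*\|\le B:=\sqrt{\|\lambda^1-\lambda^*\|^2+2\beta\sum_{k=1}^{+\infty}\eta_k},\qquad k=1,2,\dots.$$
   Context: Let $A\in\mathbb{R}^{m\times n}$ and $b\in\mathbb{R}^m$. Let $f:\mathbb{R}^n\to\mathbb{R}$ be convex and differentiable with Lipschitz continuous gradient. Let $g:\mathbb{R}^n\to\mathbb{R}\cup\{+\infty\}$ be a closed proper convex (possibly nonsmooth) function with bounded domain. Fix a penalty parameter $\beta>0$. For $\lambda\in\mathbb{R}^m$, define $$\hat f_\beta(x;\lambda):=f(x)+\langle\lambda,Ax-b\rangle+\tfrac{\beta}{2}\|Ax-b\|^2,\qquad \mathcal{L}_\beta(x;\lambda):=\hat f_\beta(x;\lambda)+g(x),$$ and $d(\lambda):=\min_{x\in\mathbb{R}^n}\mathcal{L}_\beta(x;\lambda)$. Here $\nabla\hat f_\beta(x;\lambda)$ denotes the gradient of $\hat f_\beta$ with respect to $x$. IAL framework: choose $x^1\in\operatorname{dom} g$, $\lambda^1\in\mathbb{R}^m$, and a nonnegative sequence $\{\eta_k\}$. For $k=1,2,\dots$: find a point $x^{k+1}$ such that $$\max_{x\in\mathbb{R}^n}\Big\{\langle\nabla\hat f_\beta(x^{k+1};\lambda^k),\,x^{k+1}-x\rangle+g(x^{k+1})-g(x)\Big\}\le\eta_k,$$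 and then set $\lambda^{k+1}=\lambda^k+\beta(Ax^{k+1}-b)$. *)

theory Defs
  imports "HOL-Analysis.Analysis"
begin

definition fhat ::
  "(real^'n \<Rightarrow> real) \<Rightarrow> real^'n^'m \<Rightarrow> real^'m \<Rightarrow> real \<Rightarrow> real^'n \<Rightarrow> real^'m \<Rightarrow> real" where
  "fhat f A b beta x lam =
     f x + lam \<bullet> (A *v x - b) + beta / 2 * (norm (A *v x - b))\<^sup>2"

definition grad_fhat ::
  "(real^'n \<Rightarrow> real^'n) \<Rightarrow> real^'n^'m \<Rightarrow> real^'m \<Rightarrow> real \<Rightarrow> real^'n \<Rightarrow> real^'m \<Rightarrow> real^'n" where
  "grad_fhat f' A b beta x lam =
     f' x + transpose A *v (lam + beta *\<^sub>R (A *v x - b))"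

text \<open>The extended-valued function g is represented by its (effective) domain D
  and its finite values g on D (g = +infinity outside D).\<close>
definition Lbeta ::
  "(real^'n \<Rightarrow> real) \<Rightarrow> (real^'n \<Rightarrow> real) \<Rightarrow> real^'n^'m \<Rightarrow> real^'m \<Rightarrow> real \<Rightarrow> real^'n \<Rightarrow> real^'m \<Rightarrow> real" where
  "Lbeta f g A b beta x lam = fhat f A b beta x lam + g x"

definition dual ::
  "(real^'n \<Rightarrow> real) \<Rightarrow> (real^'n \<Rightarrow> real) \<Rightarrow> (real^'n) set \<Rightarrow> real^'n^'m \<Rightarrow> real^'m \<Rightarrow> real \<Rightarrow> real^'m \<Rightarrow> real" where
  "dual f g D A b beta lam = (INF x\<in>D. Lbeta f g A b beta x lam)"

definition closed_proper_convex_bdd_dom :: "(real^'n) set \<Rightarrow> (real^'n \<Rightarrow> real) \<Rightarrow> bool" where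
  "closed_proper_convex_bdd_dom D g \<longleftrightarrow>
     D \<noteq> {} \<and> convex D \<and> bounded D \<and> convex_on D g \<and>
     closed {(x, t). x \<in> D \<and> g x \<le> t}"

end

theory Submission
  imports Defs
begin

text \<open>
  Write r = A x(k+1) - b, so that lam(k+1) = lam(k) + beta r. By convexity of f, the
  eta(k)-stationarity of x(k+1) for L_beta(.; lam(k)) makes x(k+1) an eta(k)-minimiser over
  dom g of the ordinary Lagrangian f + g + <lam(k+1), A . - b>. Hence d(lam(k+1)) is at least
  the Lagrangian at x(k+1) minus eta(k), while d(lam*) <= L_beta(x(k+1); lam*). Together with
  d(lam(k+1)) <= d(lam*) this gives <lam(k+1) - lam*, r> <= eta(k) + beta/2 |r|^2, which is
  exactly |lam(k+1) - lam*|^2 <= |lam(k) - lam*|^2 + 2 beta eta(k). Summing the increments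
  gives the bound.
\<close>

lemma convex_on_above_tangent:
  fixes f :: "'a::real_normed_vector \<Rightarrow> real"
  assumes convex: "convex_on UNIV f"
    and deriv: "(f has_derivative f') (at x)"
  shows "f x + f' (z - x) \<le> f z"
proof -
  define d where "d = z - x"
  define h where "h = (\<lambda>t::real. f (x + t *\<^sub>R d))"
  have "convex_on UNIV h"
  proof (rule convex_onI)
    fix t a c :: real
    assume "0 < t" "t < 1"
    moreover have "x + ((1 - t) *\<^sub>R a + t *\<^sub>R c) *\<^sub>R d
        = (1 - t) *\<^sub>R (x + a *\<^sub>R d) + t *\<^sub>R (x + c *\<^sub>R d)"
      by (simp add: algebra_simps)
    ultimately show "h ((1 - t) *\<^sub>R a + t *\<^sub>R c) \<le> (1 - t) * h a + t * h c"
      unfolding h_def using convex_onD[OF convex, of t "x + a *\<^sub>R d" "x + c *\<^sub>R d"] by simp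
  qed simp
  moreover have "(h has_field_derivative f' d) (at 0)"
  proof -
    have "((\<lambda>t. x + t *\<^sub>R d) has_derivative (\<lambda>t. t *\<^sub>R d)) (at 0)"
      by (auto intro!: derivative_eq_intros)
    from has_derivative_compose[OF this, of f f'] deriv
    have "(h has_derivative (\<lambda>t. f' (t *\<^sub>R d))) (at 0)"
      by (simp add: h_def o_def)
    moreover have "(\<lambda>t. f' (t *\<^sub>R d)) = (*) (f' d)"
      using linear_cmul[OF has_derivative_linear[OF deriv]] by (auto simp: fun_eq_iff)
    ultimately show ?thesis
      by (simp add: has_field_derivative_def)
  qed
  ultimately have "f' d * (1 - 0) \<le> h 1 - h 0"
    by (intro convex_on_imp_above_tangent) auto
  then show ?thesis
    by (simp add: h_def d_def)
qed

lemma power2_norm_add_scaleR: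
  fixes v w :: "'a::real_inner"
  shows "(norm (v + c *\<^sub>R w))\<^sup>2 = (norm v)\<^sup>2 + 2 * c * (v \<bullet> w) + c\<^sup>2 * (norm w)\<^sup>2"
  unfolding power2_norm_eq_inner
  by (simp add: inner_add_left inner_add_right inner_commute power2_eq_square algebra_simps)

lemma inner_add_half_norm_square_lower_bound:
  fixes v w :: "'a::real_inner"
  assumes "beta > 0"
  shows "- (norm v)\<^sup>2 / (2 * beta) \<le> v \<bullet> w + beta / 2 * (norm w)\<^sup>2"
proof -
  have "0 \<le> (norm (v + beta *\<^sub>R w))\<^sup>2 / (2 * beta)"
    using assms by simp
  also have "\<dots> = (norm v)\<^sup>2 / (2 * beta) + (v \<bullet> w + beta / 2 * (norm w)\<^sup>2)"
    unfolding power2_norm_add_scaleR using assms by (simp add: field_simps power2_eq_square)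
  finally show ?thesis
    by simp
qed

lemma le_add_suminf_of_increments:
  fixes a e :: "nat \<Rightarrow> real"
  assumes step: "\<And>n. a (Suc n) \<le> a n + e n"
    and nonneg: "\<And>n. 0 \<le> e n"
    and "summable e"
  shows "a n \<le> a 0 + (\<Sum>n. e n)"
proof -
  have "a n \<le> a 0 + (\<Sum>j<n. e j)"
  proof (induction n)
    case (Suc n)
    then show ?case
      using step[of n] by simp
  qed simp
  also have "(\<Sum>j<n. e j) \<le> (\<Sum>n. e n)"
    using assms by (intro sum_le_suminf) auto
  finally show ?thesis
    by simp
qed

lemma Lbeta_eq:
  "Lbeta f g A b beta z mu
     = f z + g z + mu \<bullet> (A *v z - b) + beta / 2 * (norm (A *v z - b))\<^sup>2"
  by (simp add: Lbeta_def fhat_def)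

lemma inexact_step_approx_minimizes_lagrangian:
  fixes f :: "real^'n \<Rightarrow> real" and A :: "real^'n^'m"
  assumes convex: "convex_on UNIV f"
    and grad: "\<And>z. (f has_derivative (\<lambda>h. f' z \<bullet> h)) (at z)"
    and stationary: "\<forall>z\<in>D. grad_fhat f' A b beta y l \<bullet> (y - z) + g y - g z \<le> eta"
    and "z \<in> D"
  defines "mu \<equiv> l + beta *\<^sub>R (A *v y - b)"
  shows "f y + g y + mu \<bullet> (A *v y - b) \<le> f z + g z + mu \<bullet> (A *v z - b) + eta"
proof -
  have "(f' y + transpose A *v mu) \<bullet> (y - z) + g y - g z \<le> eta"
    using stationary \<open>z \<in> D\<close> unfolding grad_fhat_def mu_def by auto
  moreover have "(transpose A *v mu) \<bullet> (y - z) = mu \<bullet> (A *v y - b) - mu \<bullet> (A *v z - b)"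
    by (simp add: dot_lmul_matrix matrix_vector_mult_diff_distrib inner_diff_right)
  moreover have "f y + f' y \<bullet> (z - y) \<le> f z"
    using convex_on_above_tangent[OF convex grad] .
  moreover have "f' y \<bullet> (z - y) = - (f' y \<bullet> (y - z))"
    by (simp add: inner_diff_right)
  ultimately show ?thesis
    by (simp add: inner_add_left)
qed

lemma Lbeta_lower_bound:
  assumes "beta > 0"
    and lagrangian_bound: "c \<le> f z + g z + mu\<^sub>0 \<bullet> (A *v z - b)"
  shows "c - (norm (mu - mu\<^sub>0))\<^sup>2 / (2 * beta) \<le> Lbeta f g A b beta z mu"
  using lagrangian_bound
    inner_add_half_norm_square_lower_bound[OF assms(1), of "mu - mu\<^sub>0" "A *v z - b"]
  by (simp add: Lbeta_eq inner_diff_left)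

lemma dual_ge_lagrangian_lower_bound:
  assumes "D \<noteq> {}" "beta \<ge> 0"
    and "\<And>z. z \<in> D \<Longrightarrow> c \<le> f z + g z + mu \<bullet> (A *v z - b)"
  shows "c \<le> dual f g D A b beta mu"
  unfolding dual_def
proof (rule cINF_greatest)
  fix z assume "z \<in> D"
  with assms(2,3) show "c \<le> Lbeta f g A b beta z mu"
    by (fastforce simp: Lbeta_eq intro: add_increasing2)
qed (use assms(1) in simp)

text \<open>
  The dual function is a conditionally complete infimum, so bounding it above needs
  L_beta(.; mu) to be bounded below on D; a lower bound of the Lagrangian at any mu0 provides one.
\<close>

lemma dual_le_Lbeta:
  assumes "beta > 0" "z \<in> D"
    and "\<And>y. y \<in> D \<Longrightarrow> c \<le> f y + g y + mu\<^sub>0 \<bullet> (A *v y - b)"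
  shows "dual f g D A b beta mu \<le> Lbeta f g A b beta z mu"
proof -
  have "c - (norm (mu - mu\<^sub>0))\<^sup>2 / (2 * beta) \<le> Lbeta f g A b beta y mu" if "y \<in> D" for y
    using Lbeta_lower_bound assms(1) assms(3)[OF that] .
  then have "bdd_below ((\<lambda>y. Lbeta f g A b beta y mu) ` D)"
    by (intro bdd_belowI2)
  then show ?thesis
    unfolding dual_def using assms(2) by (rule cINF_lower)
qed

lemma inexact_step_dist_dual_opt:
  fixes f :: "real^'n \<Rightarrow> real" and A :: "real^'n^'m"
  assumes convex: "convex_on UNIV f"
    and grad: "\<And>z. (f has_derivative (\<lambda>h. f' z \<bullet> h)) (at z)"
    and "beta > 0"
    and "y \<in> D"
    and stationary: "\<forall>z\<in>D. grad_fhat f' A b beta y l \<bullet> (y - z) + g y - g z \<le> eta"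
    and update: "l' = l + beta *\<^sub>R (A *v y - b)"
    and opt: "dual f g D A b beta l' \<le> dual f g D A b beta lamstar"
  shows "(norm (l' - lamstar))\<^sup>2 \<le> (norm (l - lamstar))\<^sup>2 + 2 * beta * eta"
proof -
  define r where "r = A *v y - b"
  define C where "C = f y + g y + l' \<bullet> r"
  have lagrangian_bound: "C - eta \<le> f z + g z + l' \<bullet> (A *v z - b)" if "z \<in> D" for z
    using inexact_step_approx_minimizes_lagrangian[OF convex grad stationary that]
    unfolding C_def r_def update by simp
  have "C - eta \<le> dual f g D A b beta l'"
    using \<open>beta > 0\<close> \<open>y \<in> D\<close> lagrangian_bound by (intro dual_ge_lagrangian_lower_bound) auto
  also have "\<dots> \<le> dual f g D A b beta lamstar"
    by (rule opt)
  also have "\<dots> \<le> Lbeta f g A b beta y lamstar"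
    using \<open>beta > 0\<close> \<open>y \<in> D\<close> lagrangian_bound by (rule dual_le_Lbeta)
  also have "\<dots> = C + (lamstar - l') \<bullet> r + beta / 2 * (norm r)\<^sup>2"
    unfolding Lbeta_eq C_def r_def by (simp add: inner_diff_left)
  finally have descent: "(l' - lamstar) \<bullet> r \<le> eta + beta / 2 * (norm r)\<^sup>2"
    by (simp add: inner_diff_left)
  have l'_shift: "l' - lamstar = (l - lamstar) + beta *\<^sub>R r"
    using update r_def by simp
  have "(l' - lamstar) \<bullet> r = (l - lamstar) \<bullet> r + beta * (norm r)\<^sup>2"
    unfolding l'_shift by (simp add: inner_add_left power2_norm_eq_inner)
  then have "(norm (l' - lamstar))\<^sup>2
      = (norm (l - lamstar))\<^sup>2 + 2 * beta * ((l' - lamstar) \<bullet> r) - beta\<^sup>2 * (norm r)\<^sup>2"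
    unfolding l'_shift power2_norm_add_scaleR
    by (simp add: algebra_simps power2_eq_square dot_square_norm[unfolded power2_eq_square])
  also have "\<dots> \<le> (norm (l - lamstar))\<^sup>2 + 2 * beta * (eta + beta / 2 * (norm r)\<^sup>2)
      - beta\<^sup>2 * (norm r)\<^sup>2"
    using descent \<open>beta > 0\<close> by simp
  also have "\<dots> = (norm (l - lamstar))\<^sup>2 + 2 * beta * eta"
    by (simp add: algebra_simps power2_eq_square)
  finally show ?thesis .
qed

theorem lemma3:
  fixes f :: "real^'n \<Rightarrow> real" and f' :: "real^'n \<Rightarrow> real^'n"
    and g :: "real^'n \<Rightarrow> real" and D :: "(real^'n) set"
    and A :: "real^'n^'m" and b :: "real^'m" and beta :: real
    and x :: "nat \<Rightarrow> real^'n" and lam :: "nat \<Rightarrow> real^'m" and eta :: "nat \<Rightarrow> real"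
    and lamstar :: "real^'m"
  assumes f_convex: "convex_on UNIV f"
    and f_grad: "\<And>z. (f has_derivative (\<lambda>h. f' z \<bullet> h)) (at z)"
    and f_lip: "\<exists>L. \<forall>y z. norm (f' y - f' z) \<le> L * norm (y - z)"
    and g_cpc: "closed_proper_convex_bdd_dom D g"
    and beta_pos: "beta > 0"
    and opt: "\<And>mu. dual f g D A b beta mu \<le> dual f g D A b beta lamstar"
    and x1: "x 1 \<in> D"
    and eta_nonneg: "\<And>k. k \<ge> 1 \<Longrightarrow> eta k \<ge> 0"
    and eta_sum: "summable (\<lambda>k. eta (Suc k))"
    and inexact: "\<And>k. k \<ge> 1 \<Longrightarrow> x (Suc k) \<in> D \<and>
        (\<forall>z\<in>D. grad_fhat f' A b beta (x (Suc k)) (lam k) \<bullet> (x (Suc k) - z)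
                 + g (x (Suc k)) - g z \<le> eta k)"
    and update: "\<And>k. k \<ge> 1 \<Longrightarrow> lam (Suc k) = lam k + beta *\<^sub>R (A *v x (Suc k) - b)"
  shows "\<forall>k\<ge>1. norm (lam k - lamstar)
           \<le> sqrt ((norm (lam 1 - lamstar))\<^sup>2 + 2 * beta * (\<Sum>k. eta (Suc k)))"
proof (intro allI impI)
  fix k :: nat
  assume "k \<ge> 1"
  then obtain n where k: "k = Suc n"
    using not0_implies_Suc by fastforce
  have increment: "(norm (lam (Suc (Suc j)) - lamstar))\<^sup>2
      \<le> (norm (lam (Suc j) - lamstar))\<^sup>2 + 2 * beta * eta (Suc j)" for j
    using inexact[of "Suc j"] update[of "Suc j"]
    by (intro inexact_step_dist_dual_opt[OF f_convex f_grad beta_pos _ _ _ opt]) auto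
  have "(norm (lam (Suc n) - lamstar))\<^sup>2
      \<le> (norm (lam 1 - lamstar))\<^sup>2 + (\<Sum>j. 2 * beta * eta (Suc j))"
    using le_add_suminf_of_increments[where a = "\<lambda>j. (norm (lam (Suc j) - lamstar))\<^sup>2"
        and e = "\<lambda>j. 2 * beta * eta (Suc j)", OF increment] eta_nonneg beta_pos
      eta_sum summable_mult
    by simp
  then show "norm (lam k - lamstar)
      \<le> sqrt ((norm (lam 1 - lamstar))\<^sup>2 + 2 * beta * (\<Sum>k. eta (Suc k)))"
    unfolding k suminf_mult[OF eta_sum] by (rule real_le_rsqrt)
qed

end
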